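(* Let $G=(V,E)$ be an infinite vertex-transitive simple graph and let $\alpha_0$ be the unique solution of $\alpha + \tfrac12\log(1+e^{-2\alpha}) = \log\mu_G$. For any $\alpha > \alpha_0$ there exists $c_1(\alpha)>0$ such that for any finite $U \subset V$ and all $A \subset U$, $$\frac{Z(U \setminus A)}{Z(U)} \geq c_1(\alpha)^{|A|}.$$ Moreover, $c_1(\alpha)$ can be chosen such that $\lim_{\alpha \to \infty} c_1(\alpha) = 1$.
   Context: For finite $U\subset V$, $Z(U)=\sum_{\pi}\exp(-\alpha\sum_{x\in U}\mathbb 1\{\pi(x)\neq x\})$, where the sum runs over bijections $\pi:U\to U$ with $\pi(x)=x$ or $\{x,\pi(x)\}\in E$ for all $x\in U$; $Z(\emptyset)=1$. A cycle in $G$ is a finite directed subgraph with vertices enumerated $x^1,\dots,x^n$ and edges $(x^i,x^{i+1})$, $1\le i\le n-1$, and $(x^n,x^1)$. With a fixed origin $0\in V$, $SAP_n$ is the set of cycles starting from $0$ with $n$ edges, and $\mu_G=\limsup_{n\to\infty}|SAP_n|^{1/n}$ is the cyclic connective constant. *)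

theory Defs
  imports "HOL-Analysis.Analysis"
begin

text \<open>Graphs: vertex set = UNIV of type 'v, edges given by a relation E.\<close>

definition simple_graph :: "('v \<Rightarrow> 'v \<Rightarrow> bool) \<Rightarrow> bool" where
  "simple_graph E \<longleftrightarrow> (\<forall>x y. E x y \<longrightarrow> E y x) \<and> (\<forall>x. \<not> E x x)"

definition graph_automorphism :: "('v \<Rightarrow> 'v \<Rightarrow> bool) \<Rightarrow> ('v \<Rightarrow> 'v) \<Rightarrow> bool" where
  "graph_automorphism E \<phi> \<longleftrightarrow> bij \<phi> \<and> (\<forall>a b. E a b \<longleftrightarrow> E (\<phi> a) (\<phi> b))"

definition vertex_transitive :: "('v \<Rightarrow> 'v \<Rightarrow> bool) \<Rightarrow> bool" where
  "vertex_transitive E \<longleftrightarrow> (\<forall>x y. \<exists>\<phi>. graph_automorphism E \<phi> \<and> \<phi> x = y)"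

definition locally_finite :: "('v \<Rightarrow> 'v \<Rightarrow> bool) \<Rightarrow> bool" where
  "locally_finite E \<longleftrightarrow> (\<forall>x. finite {y. E x y})"

definition adm_perms :: "('v \<Rightarrow> 'v \<Rightarrow> bool) \<Rightarrow> 'v set \<Rightarrow> ('v \<Rightarrow> 'v) set" where
  "adm_perms E U = {\<pi>. bij_betw \<pi> U U \<and> (\<forall>x. x \<notin> U \<longrightarrow> \<pi> x = x)
                        \<and> (\<forall>x\<in>U. \<pi> x = x \<or> E x (\<pi> x))}"

definition Z :: "('v \<Rightarrow> 'v \<Rightarrow> bool) \<Rightarrow> real \<Rightarrow> 'v set \<Rightarrow> real" where
  "Z E \<alpha> U = (\<Sum>\<pi>\<in>adm_perms E U. exp (- \<alpha> * real (card {x\<in>U. \<pi> x \<noteq> x})))"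

text \<open>Cycles starting from the origin o with n edges, represented by the enumeration
  [x^1,...,x^n] of their (distinct) vertices, x^1 = o.\<close>

definition SAP :: "('v \<Rightarrow> 'v \<Rightarrow> bool) \<Rightarrow> 'v \<Rightarrow> nat \<Rightarrow> 'v list set" where
  "SAP E v0 n = {xs. length xs = n \<and> n \<ge> 1 \<and> distinct xs \<and> xs ! 0 = v0
                  \<and> (\<forall>i. Suc i < n \<longrightarrow> E (xs ! i) (xs ! Suc i))
                  \<and> E (xs ! (n - 1)) (xs ! 0)}"

definition cyclic_connective_constant :: "('v \<Rightarrow> 'v \<Rightarrow> bool) \<Rightarrow> 'v \<Rightarrow> ereal" where
  "cyclic_connective_constant E v0 =
     limsup (\<lambda>n. ereal (root n (real (card (SAP E v0 n)))))"

end

theory Submission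
  imports Defs "HOL-Combinatorics.Orbits" "HOL-Real_Asymp.Real_Asymp"
begin

text \<open>It suffices to delete one vertex \<open>x\<close> at a time. An admissible permutation of \<open>W\<close> either
  fixes \<open>x\<close>, or splits into its cycle through \<open>x\<close>, a cycle of some length \<open>n \<ge> 2\<close> of weight
  \<open>exp (-\<alpha> n)\<close>, and an admissible permutation of the remaining vertices. Conversely, the cycle
  without \<open>x\<close> is a path inside \<open>W - {x}\<close>, and swapping consecutive pairs along it shows
  \<open>(1 + exp (-2\<alpha>))\<^bsup>\<lfloor>(n-1)/2\<rfloor>\<^esup> Z(W - cycle) \<le> Z(W - {x})\<close>. Bounding the number of cycles
  through \<open>x\<close> by \<open>|SAP\<^sub>n|\<close> (vertex transitivity) gives
  \<open>Z(W) \<le> Z(W - {x}) (1 + (1 + exp (-2\<alpha>)) \<Sum>\<^sub>n |SAP\<^sub>n| q\<^sup>n)\<close> with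
  \<open>q = exp (-\<alpha>) / sqrt (1 + exp (-2\<alpha>))\<close>. The series converges when
  \<open>\<mu> q < 1\<close>, which is exactly \<open>\<alpha> > \<alpha>\<^sub>0\<close>, and it is \<open>O(q\<^sup>2)\<close> as \<open>\<alpha> \<rightarrow> \<infinity>\<close> because there are
  no cycles of length below 2.\<close>

lemma adm_perms_iff:
  "\<pi> \<in> adm_perms E W \<longleftrightarrow> \<pi> permutes W \<and> (\<forall>x\<in>W. \<pi> x = x \<or> E x (\<pi> x))"
  unfolding adm_perms_def
  by (auto intro: bij_imp_permutes permutes_imp_bij simp: permutes_not_in)

lemma finite_adm_perms: "finite W \<Longrightarrow> finite (adm_perms E W)"
  by (rule finite_subset[OF _ finite_permutations[of W]]) (auto simp: adm_perms_iff)

lemma id_in_adm_perms: "id \<in> adm_perms E W"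
  by (simp add: adm_perms_iff permutes_id)

lemma Z_pos: "finite W \<Longrightarrow> 0 < Z E \<alpha> W"
  unfolding Z_def by (rule sum_pos2[OF finite_adm_perms id_in_adm_perms]) auto

lemma Z_nonneg: "0 \<le> Z E \<alpha> W"
  unfolding Z_def by (simp add: sum_nonneg)

lemma adm_perms_mono:
  assumes "B \<subseteq> W" shows "adm_perms E B \<subseteq> adm_perms E W"
proof
  fix \<pi> assume "\<pi> \<in> adm_perms E B"
  then have p: "\<pi> permutes B" and e: "\<forall>x\<in>B. \<pi> x = x \<or> E x (\<pi> x)"
    by (auto simp: adm_perms_iff)
  have "\<forall>x\<in>W. \<pi> x = x \<or> E x (\<pi> x)" using e p by (metis permutes_not_in)
  with permutes_subset[OF p assms] show "\<pi> \<in> adm_perms E W" by (simp add: adm_perms_iff)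
qed

lemma moved_points_adm_perms:
  "\<pi> \<in> adm_perms E B \<Longrightarrow> B \<subseteq> W \<Longrightarrow> {x\<in>W. \<pi> x \<noteq> x} = {x\<in>B. \<pi> x \<noteq> x}"
  by (auto simp: adm_perms_def)

lemma Z_eq_sum_over_superset:
  "B \<subseteq> W \<Longrightarrow> Z E \<alpha> B = (\<Sum>\<pi>\<in>adm_perms E B. exp (- \<alpha> * real (card {x\<in>W. \<pi> x \<noteq> x})))"
  unfolding Z_def by (rule sum.cong) (simp_all add: moved_points_adm_perms[of _ E B W])

lemma Z_mono:
  assumes "finite W" "B \<subseteq> W" shows "Z E \<alpha> B \<le> Z E \<alpha> W"
  unfolding Z_eq_sum_over_superset[OF assms(2)] unfolding Z_def
  by (rule sum_mono2[OF finite_adm_perms[OF assms(1)] adm_perms_mono[OF assms(2)]]) auto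

lemma transpose_comp_in_adm_perms:
  assumes \<pi>: "\<pi> \<in> adm_perms E C" and "a \<notin> C" "b \<notin> C" "E a b" "E b a"
  shows "Transposition.transpose a b \<circ> \<pi> \<in> adm_perms E (insert a (insert b C))"
proof -
  let ?D = "insert a (insert b C)" and ?\<sigma> = "Transposition.transpose a b \<circ> \<pi>"
  have p: "\<pi> permutes C" and e: "\<forall>x\<in>C. \<pi> x = x \<or> E x (\<pi> x)" using \<pi> by (auto simp: adm_perms_iff)
  have "Transposition.transpose a b permutes ?D" by (rule permutes_swap_id) auto
  then have "?\<sigma> permutes ?D" by (rule permutes_compose[OF permutes_subset[OF p], rotated]) auto
  moreover have "?\<sigma> x = x \<or> E x (?\<sigma> x)" if "x \<in> ?D" for x
  proof (cases "x \<in> C")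
    case True
    then have "\<pi> x \<in> C" using p by (simp add: permutes_in_image)
    then show ?thesis using e True assms by (auto simp: Transposition.transpose_def)
  next
    case False
    then have "\<pi> x = x" using p by (simp add: permutes_not_in)
    then show ?thesis using False that assms by (auto simp: Transposition.transpose_def)
  qed
  ultimately show ?thesis by (simp add: adm_perms_iff)
qed

lemma moved_points_transpose_comp:
  assumes p: "\<pi> permutes C" and "a \<notin> C" "b \<notin> C" "a \<noteq> b"
  shows "{x\<in>insert a (insert b C). (Transposition.transpose a b \<circ> \<pi>) x \<noteq> x}
           = insert a (insert b {x\<in>C. \<pi> x \<noteq> x})"
proof (rule set_eqI)
  fix x
  show "x \<in> {x\<in>insert a (insert b C). (Transposition.transpose a b \<circ> \<pi>) x \<noteq> x}
    \<longleftrightarrow> x \<in> insert a (insert b {x\<in>C. \<pi> x \<noteq> x})"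
  proof (cases "x \<in> C")
    case True
    then have "\<pi> x \<in> C" using p by (simp add: permutes_in_image)
    then show ?thesis using True assms by (auto simp: Transposition.transpose_def)
  next
    case False
    then have "\<pi> x = x" using p by (simp add: permutes_not_in)
    then show ?thesis using False assms by (auto simp: Transposition.transpose_def)
  qed
qed

text \<open>Every admissible permutation of \<open>C\<close> is admissible on \<open>C \<union> {a, b}\<close>, and so is its
  composition with the transposition of the edge \<open>{a, b}\<close>, which costs two more moved points.\<close>

lemma Z_insert_edge:
  assumes fin: "finite C" and "a \<notin> C" "b \<notin> C" "a \<noteq> b" "E a b" "E b a"
  shows "(1 + exp (-2*\<alpha>)) * Z E \<alpha> C \<le> Z E \<alpha> (insert a (insert b C))"
proof -
  let ?D = "insert a (insert b C)"
  let ?w = "\<lambda>\<pi>. exp (- \<alpha> * real (card {x\<in>?D. \<pi> x \<noteq> x}))"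
  let ?t = "\<lambda>\<pi>. Transposition.transpose a b \<circ> \<pi>"
  let ?S = "adm_perms E C"
  have "C \<subseteq> ?D" by auto
  have in_D: "?S \<union> ?t ` ?S \<subseteq> adm_perms E ?D"
    using adm_perms_mono[OF \<open>C \<subseteq> ?D\<close>] transpose_comp_in_adm_perms[OF _ assms(2,3,5,6)] by blast
  have disj: "?S \<inter> ?t ` ?S = {}"
    using \<open>a \<notin> C\<close> \<open>a \<noteq> b\<close> by (auto simp: adm_perms_def Transposition.transpose_def)
  have inj: "inj_on ?t ?S"
    by (rule inj_onI) (metis comp_apply transpose_involutory ext)
  have w: "(?w \<circ> ?t) \<pi> = exp (-2*\<alpha>) * exp (- \<alpha> * real (card {x\<in>C. \<pi> x \<noteq> x}))" if "\<pi> \<in> ?S" for \<pi>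
  proof -
    have "\<pi> permutes C" using that by (simp add: adm_perms_iff)
    then have "card {x\<in>?D. ?t \<pi> x \<noteq> x} = card {x\<in>C. \<pi> x \<noteq> x} + 2"
      using assms by (subst moved_points_transpose_comp) simp_all
    then show ?thesis by (simp add: algebra_simps flip: exp_add)
  qed
  have "sum (?w \<circ> ?t) ?S = exp (-2*\<alpha>) * Z E \<alpha> C"
    unfolding Z_def sum_distrib_left by (rule sum.cong[OF refl]) (rule w)
  then have "(1 + exp (-2*\<alpha>)) * Z E \<alpha> C = sum ?w ?S + sum (?w \<circ> ?t) ?S"
    by (simp add: Z_eq_sum_over_superset[OF \<open>C \<subseteq> ?D\<close>] distrib_right)
  also have "\<dots> = sum ?w (?S \<union> ?t ` ?S)"
    using fin disj by (simp add: sum.union_disjoint finite_adm_perms sum.reindex[OF inj])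
  also have "\<dots> \<le> Z E \<alpha> ?D"
    unfolding Z_def using in_D fin by (intro sum_mono2 finite_adm_perms) auto
  finally show ?thesis .
qed

lemma Z_union_path:
  assumes fin: "finite B" and sg: "simple_graph E"
    and "distinct ys" "set ys \<inter> B = {}" "\<forall>i. Suc i < length ys \<longrightarrow> E (ys!i) (ys!Suc i)"
  shows "(1 + exp (-2*\<alpha>)) ^ (length ys div 2) * Z E \<alpha> B \<le> Z E \<alpha> (B \<union> set ys)"
  using assms(3-5)
proof (induction ys rule: induct_list012)
  case 1 then show ?case by simp
next
  case (2 x) then show ?case using Z_mono[of "B \<union> {x}" B E \<alpha>] fin by auto
next
  case (3 x y zs)
  have "\<forall>i. Suc i < length zs \<longrightarrow> E (zs!i) (zs!Suc i)"
    using "3.prems"(3) by (metis Suc_less_eq length_Cons nth_Cons_Suc)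
  then have IH: "(1 + exp (-2*\<alpha>)) ^ (length zs div 2) * Z E \<alpha> B \<le> Z E \<alpha> (B \<union> set zs)"
    using "3.IH" "3.prems" by auto
  have "E x y" using "3.prems"(3) by force
  then have "E y x" using sg by (simp add: simple_graph_def)
  have "(1 + exp (-2*\<alpha>)) ^ (length (x#y#zs) div 2) * Z E \<alpha> B
      = (1 + exp (-2*\<alpha>)) * ((1 + exp (-2*\<alpha>)) ^ (length zs div 2) * Z E \<alpha> B)" by simp
  also have "\<dots> \<le> (1 + exp (-2*\<alpha>)) * Z E \<alpha> (B \<union> set zs)"
    by (rule mult_left_mono[OF IH]) simp
  also have "\<dots> \<le> Z E \<alpha> (insert x (insert y (B \<union> set zs)))"
    using "3.prems" fin \<open>E x y\<close> \<open>E y x\<close> by (intro Z_insert_edge) auto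
  finally show ?case by simp
qed

lemma Z_diff_cycle:
  assumes fin: "finite W" and sg: "simple_graph E" and xs: "xs \<in> SAP E x n" and sub: "set xs \<subseteq> W"
  shows "(1 + exp (-2*\<alpha>)) ^ ((n - 1) div 2) * Z E \<alpha> (W - set xs) \<le> Z E \<alpha> (W - {x})"
proof -
  from xs have l: "length xs = n" "n \<ge> 1" "distinct xs" "xs ! 0 = x"
    and path: "\<forall>i. Suc i < n \<longrightarrow> E (xs ! i) (xs ! Suc i)" by (auto simp: SAP_def)
  have xs_eq: "xs = x # tl xs" using l by (cases xs) auto
  have set_xs: "set xs = insert x (set (tl xs))" by (subst xs_eq) simp
  have "x \<notin> set (tl xs)" "distinct (tl xs)" using l(3) xs_eq by (metis distinct.simps(2))+
  then have W: "(W - set xs) \<union> set (tl xs) = W - {x}" using sub unfolding set_xs by auto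
  have "\<forall>i. Suc i < length (tl xs) \<longrightarrow> E (tl xs ! i) (tl xs ! Suc i)"
    using path l(1) by (simp add: nth_tl)
  then have "(1 + exp (-2*\<alpha>)) ^ (length (tl xs) div 2) * Z E \<alpha> (W - set xs)
      \<le> Z E \<alpha> ((W - set xs) \<union> set (tl xs))"
    using \<open>distinct (tl xs)\<close> fin sg set_xs by (intro Z_union_path) auto
  then show ?thesis using W l(1) by simp
qed

definition cycle_of :: "('a \<Rightarrow> 'a) \<Rightarrow> 'a \<Rightarrow> 'a list" where
  "cycle_of \<pi> x = map (\<lambda>i. (\<pi> ^^ i) x) [0..<funpow_dist1 \<pi> x x]"

lemma length_cycle_of [simp]: "length (cycle_of \<pi> x) = funpow_dist1 \<pi> x x"
  by (simp add: cycle_of_def del: upt_Suc)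

lemma nth_cycle_of: "i < funpow_dist1 \<pi> x x \<Longrightarrow> cycle_of \<pi> x ! i = (\<pi> ^^ i) x"
  by (simp add: cycle_of_def del: upt_Suc)

lemma cycle_of_0: "cycle_of \<pi> x ! 0 = x"
  by (simp add: nth_cycle_of)

lemma set_cycle_of: "permutation \<pi> \<Longrightarrow> set (cycle_of \<pi> x) = orbit \<pi> x"
  by (simp add: cycle_of_def orbit_conv_funpow_dist1 permutation_self_in_orbit del: upt_Suc)

lemma distinct_cycle_of: "permutation \<pi> \<Longrightarrow> distinct (cycle_of \<pi> x)"
  by (simp add: cycle_of_def distinct_map inj_on_funpow_dist1 permutation_self_in_orbit del: upt_Suc)

lemma cycle_of_succ:
  assumes "permutation \<pi>" and i: "i < length (cycle_of \<pi> x)"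
  shows "\<pi> (cycle_of \<pi> x ! i) = cycle_of \<pi> x ! (Suc i mod length (cycle_of \<pi> x))"
proof (cases "Suc i < length (cycle_of \<pi> x)")
  case True
  then show ?thesis using i by (simp add: nth_cycle_of)
next
  case False
  then have "Suc i = funpow_dist1 \<pi> x x" using i by simp
  then show ?thesis
    using funpow_dist1_prop[OF permutation_self_in_orbit[OF assms(1)]] i
    by (simp add: nth_cycle_of cycle_of_0)
qed

lemma permutation_if_adm_perms: "\<pi> \<in> adm_perms E W \<Longrightarrow> finite W \<Longrightarrow> permutation \<pi>"
  by (auto simp: adm_perms_iff permutation_permutes)

lemma orbit_of_moved_point_moved:
  assumes "permutation \<pi>" "\<pi> x \<noteq> x" "y \<in> orbit \<pi> x"
  shows "\<pi> y \<noteq> y"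
proof
  assume "\<pi> y = y"
  then have "orbit \<pi> x = {y}"
    using orbit_cyclic_eq3[OF cyclic_on_orbit'[OF assms(1)] assms(3)] orbit_eq_singleton_iff by metis
  then show False using permutation_self_in_orbit[OF assms(1), of x] orbit.base[of \<pi> x] assms(2) by simp
qed

lemma two_le_length_cycle_of:
  assumes "permutation \<pi>" "\<pi> x \<noteq> x"
  shows "2 \<le> length (cycle_of \<pi> x)"
proof -
  have "{x, \<pi> x} \<subseteq> set (cycle_of \<pi> x)"
    using set_cycle_of[OF assms(1)] permutation_self_in_orbit[OF assms(1)] orbit.base by auto
  then have "card {x, \<pi> x} \<le> length (cycle_of \<pi> x)"
    using card_mono[OF finite_set] distinct_card[OF distinct_cycle_of[OF assms(1)]] by metis
  then show ?thesis using assms(2) by simp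
qed

lemma cycle_of_in_SAP:
  assumes adm: "\<pi> \<in> adm_perms E W" and "finite W" "x \<in> W" "\<pi> x \<noteq> x"
  shows "cycle_of \<pi> x \<in> SAP E x (length (cycle_of \<pi> x))"
proof -
  let ?xs = "cycle_of \<pi> x" and ?n = "length (cycle_of \<pi> x)"
  have p: "permutation \<pi>" using adm \<open>finite W\<close> by (rule permutation_if_adm_perms)
  have succ: "\<pi> (?xs ! i) = ?xs ! (Suc i mod ?n)" if "i < ?n" for i
    using cycle_of_succ[OF p that] .
  have edge: "E (?xs ! i) (\<pi> (?xs ! i))" if "i < ?n" for i
  proof -
    have "?xs ! i \<in> orbit \<pi> x" using that set_cycle_of[OF p] nth_mem by metis
    moreover have "orbit \<pi> x \<subseteq> W"
      using adm \<open>x \<in> W\<close> by (auto simp: adm_perms_iff dest: permutes_orbit_subset)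
    ultimately show ?thesis
      using adm orbit_of_moved_point_moved[OF p \<open>\<pi> x \<noteq> x\<close>] by (auto simp: adm_perms_iff)
  qed
  have n: "2 \<le> ?n" using two_le_length_cycle_of[OF p \<open>\<pi> x \<noteq> x\<close>] .
  have "E (?xs ! i) (?xs ! Suc i)" if "Suc i < ?n" for i
    using edge[of i] succ[of i] that by simp
  moreover have "E (?xs ! (?n - 1)) (?xs ! 0)"
    using edge[of "?n - 1"] succ[of "?n - 1"] n by simp
  ultimately show ?thesis
    unfolding SAP_def using distinct_cycle_of[OF p] cycle_of_0 n by auto
qed

lemma perm_restrict_in_adm_perms:
  assumes adm: "\<pi> \<in> adm_perms E W" and fin: "finite W"
  shows "perm_restrict \<pi> (W - orbit \<pi> x) \<in> adm_perms E (W - orbit \<pi> x)"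
proof -
  have p: "\<pi> permutes W" and e: "\<forall>y\<in>W. \<pi> y = y \<or> E y (\<pi> y)"
    using adm by (auto simp: adm_perms_iff)
  have "perm_restrict \<pi> (W - orbit \<pi> x) permutes (W - orbit \<pi> x)"
    using perm_restrict_diff_cyclic[OF p cyclic_on_orbit[OF p fin]] .
  with e show ?thesis by (simp add: adm_perms_iff perm_restrict_simps)
qed

lemma card_moved_points_remove_cycle:
  assumes adm: "\<pi> \<in> adm_perms E W" and fin: "finite W" and "x \<in> W" "\<pi> x \<noteq> x"
  shows "card {y\<in>W. \<pi> y \<noteq> y}
    = length (cycle_of \<pi> x) + card {y\<in>W - orbit \<pi> x. perm_restrict \<pi> (W - orbit \<pi> x) y \<noteq> y}"
proof -
  have p: "permutation \<pi>" using adm fin by (rule permutation_if_adm_perms)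
  have sub: "orbit \<pi> x \<subseteq> W"
    using adm \<open>x \<in> W\<close> by (auto simp: adm_perms_iff dest: permutes_orbit_subset)
  then have split: "{y\<in>W. \<pi> y \<noteq> y}
      = orbit \<pi> x \<union> {y\<in>W - orbit \<pi> x. perm_restrict \<pi> (W - orbit \<pi> x) y \<noteq> y}"
    using orbit_of_moved_point_moved[OF p \<open>\<pi> x \<noteq> x\<close>] by (auto simp: perm_restrict_simps)
  have "card (orbit \<pi> x) = length (cycle_of \<pi> x)"
    using distinct_card[OF distinct_cycle_of[OF p]] set_cycle_of[OF p] by simp
  then show ?thesis
    unfolding split using finite_subset[OF sub fin] fin by (subst card_Un_disjoint) auto
qed

lemma adm_perms_eqI:
  assumes "\<pi>\<^sub>1 \<in> adm_perms E W" "\<pi>\<^sub>2 \<in> adm_perms E W" and fin: "finite W"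
    and cyc: "cycle_of \<pi>\<^sub>1 x = cycle_of \<pi>\<^sub>2 x"
    and rest: "perm_restrict \<pi>\<^sub>1 (W - orbit \<pi>\<^sub>1 x) = perm_restrict \<pi>\<^sub>2 (W - orbit \<pi>\<^sub>2 x)"
  shows "\<pi>\<^sub>1 = \<pi>\<^sub>2"
proof
  fix y
  have p: "permutation \<pi>\<^sub>1" "permutation \<pi>\<^sub>2" using assms(1,2) fin by (auto intro: permutation_if_adm_perms)
  have orb: "orbit \<pi>\<^sub>1 x = orbit \<pi>\<^sub>2 x" using cyc set_cycle_of p by metis
  show "\<pi>\<^sub>1 y = \<pi>\<^sub>2 y"
  proof (cases "y \<in> orbit \<pi>\<^sub>1 x")
    case True
    then obtain i where "i < length (cycle_of \<pi>\<^sub>1 x)" "y = cycle_of \<pi>\<^sub>1 x ! i"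
      using set_cycle_of[OF p(1)] by (metis in_set_conv_nth)
    then show ?thesis using cycle_of_succ[OF p(1)] cycle_of_succ[OF p(2)] cyc by metis
  next
    case False
    then have "y \<notin> W \<Longrightarrow> \<pi>\<^sub>1 y = y \<and> \<pi>\<^sub>2 y = y" using assms(1,2) by (simp add: adm_perms_def)
    then show ?thesis
      using False fun_cong[OF rest, of y] orb by (cases "y \<in> W") (auto simp: perm_restrict_simps)
  qed
qed

lemma adm_perms_fixing:
  assumes "x \<in> W"
  shows "{\<pi>\<in>adm_perms E W. \<pi> x = x} = adm_perms E (W - {x})"
proof
  show "{\<pi>\<in>adm_perms E W. \<pi> x = x} \<subseteq> adm_perms E (W - {x})"
  proof
    fix \<pi> assume "\<pi> \<in> {\<pi>\<in>adm_perms E W. \<pi> x = x}"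
    then have p: "\<pi> permutes W" "\<forall>y\<in>W. \<pi> y = y \<or> E y (\<pi> y)" "\<pi> x = x"
      by (auto simp: adm_perms_iff)
    have "\<pi> permutes (W - {x})"
      using p by (auto simp: permutes_def)
    then show "\<pi> \<in> adm_perms E (W - {x})" using p by (auto simp: adm_perms_iff)
  qed
  show "adm_perms E (W - {x}) \<subseteq> {\<pi>\<in>adm_perms E W. \<pi> x = x}"
    using adm_perms_mono[of "W - {x}" W E] by (auto simp: adm_perms_def)
qed

lemma finite_SAP_within: "finite W \<Longrightarrow> finite {xs\<in>SAP E x n. set xs \<subseteq> W}"
  by (rule finite_subset[OF _ finite_lists_length_le[of W n]]) (auto simp: SAP_def)

lemma Z_split_fixing:
  assumes fin: "finite W" and x: "x \<in> W"
  shows "Z E \<alpha> W = Z E \<alpha> (W - {x})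
    + (\<Sum>\<pi>\<in>{\<pi>\<in>adm_perms E W. \<pi> x \<noteq> x}. exp (- \<alpha> * real (card {y\<in>W. \<pi> y \<noteq> y})))"
proof -
  let ?w = "\<lambda>\<pi>. exp (- \<alpha> * real (card {y\<in>W. \<pi> y \<noteq> y}))"
  have "Z E \<alpha> W = sum ?w {\<pi>\<in>adm_perms E W. \<pi> x = x} + sum ?w {\<pi>\<in>adm_perms E W. \<pi> x \<noteq> x}"
    unfolding Z_def using finite_adm_perms[OF fin]
    by (subst sum.union_disjoint[symmetric]) (auto intro: sum.cong)
  also have "sum ?w {\<pi>\<in>adm_perms E W. \<pi> x = x} = Z E \<alpha> (W - {x})"
    unfolding adm_perms_fixing[OF x] by (simp add: Z_eq_sum_over_superset[of "W - {x}" W])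
  finally show ?thesis .
qed

text \<open>An admissible permutation moving \<open>x\<close> is determined by the cycle through \<open>x\<close> and by its
  restriction to the remaining vertices.\<close>

lemma Z_le_cycle_expansion:
  assumes fin: "finite W" and x: "x \<in> W"
  shows "Z E \<alpha> W \<le> Z E \<alpha> (W - {x}) +
    (\<Sum>n\<in>{2..card W}. \<Sum>xs\<in>{xs\<in>SAP E x n. set xs \<subseteq> W}. exp (-\<alpha> * real n) * Z E \<alpha> (W - set xs))"
proof -
  let ?w = "\<lambda>\<pi>. exp (- \<alpha> * real (card {y\<in>W. \<pi> y \<noteq> y}))"
  let ?M = "{\<pi>\<in>adm_perms E W. \<pi> x \<noteq> x}"
  let ?T = "\<lambda>n. {xs\<in>SAP E x n. set xs \<subseteq> W}"
  let ?I = "SIGMA n:{2..card W}. SIGMA xs:?T n. adm_perms E (W - set xs)"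
  let ?h = "\<lambda>(n, xs, \<rho>). exp (-\<alpha> * real n) * exp (- \<alpha> * real (card {y\<in>W - set xs. \<rho> y \<noteq> y}))"
  let ?g = "\<lambda>\<pi>. (length (cycle_of \<pi> x), cycle_of \<pi> x, perm_restrict \<pi> (W - orbit \<pi> x))"
  have g_in: "?g \<pi> \<in> ?I" and w_eq: "?w \<pi> = ?h (?g \<pi>)" if "\<pi> \<in> ?M" for \<pi>
  proof -
    have adm: "\<pi> \<in> adm_perms E W" and mv: "\<pi> x \<noteq> x" using that by auto
    have p: "permutation \<pi>" using adm fin by (rule permutation_if_adm_perms)
    have orb: "orbit \<pi> x = set (cycle_of \<pi> x)" using set_cycle_of[OF p] by simp
    have sub: "set (cycle_of \<pi> x) \<subseteq> W"
      using adm x orb by (auto simp: adm_perms_iff dest: permutes_orbit_subset)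
    have "length (cycle_of \<pi> x) \<le> card W"
      using card_mono[OF fin sub] distinct_card[OF distinct_cycle_of[OF p]] by simp
    then show "?g \<pi> \<in> ?I"
      using cycle_of_in_SAP[OF adm fin x mv] two_le_length_cycle_of[OF p mv] sub
        perm_restrict_in_adm_perms[OF adm fin, of x] unfolding orb by auto
    show "?w \<pi> = ?h (?g \<pi>)"
      using card_moved_points_remove_cycle[OF adm fin x mv] orb
      by (simp add: algebra_simps flip: exp_add)
  qed
  have "inj_on ?g ?M"
    by (rule inj_onI) (use adm_perms_eqI[OF _ _ fin] in auto)
  have "sum ?w ?M = sum (?h \<circ> ?g) ?M"
    by (rule sum.cong[OF refl]) (simp only: comp_apply w_eq)
  also have "\<dots> = sum ?h (?g ` ?M)"
    by (rule sum.reindex[symmetric]) fact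
  also have "\<dots> \<le> sum ?h ?I"
    using g_in fin finite_SAP_within by (intro sum_mono2 finite_SigmaI finite_adm_perms) auto
  also have "\<dots> = (\<Sum>n\<in>{2..card W}. \<Sum>p\<in>Sigma (?T n) (\<lambda>xs. adm_perms E (W - set xs)). ?h (n, p))"
    using fin finite_SAP_within
    by (subst sum.Sigma) (auto intro!: finite_adm_perms finite_SigmaI finite_SAP_within simp: case_prod_beta)
  also have "\<dots> = (\<Sum>n\<in>{2..card W}. \<Sum>xs\<in>?T n. exp (-\<alpha> * real n) * Z E \<alpha> (W - set xs))"
  proof (rule sum.cong[OF refl])
    fix n
    have "(\<Sum>p\<in>Sigma (?T n) (\<lambda>xs. adm_perms E (W - set xs)). ?h (n, p))
       = (\<Sum>xs\<in>?T n. \<Sum>\<rho>\<in>adm_perms E (W - set xs). ?h (n, xs, \<rho>))"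
      using fin by (subst sum.Sigma) (auto intro!: finite_adm_perms finite_SAP_within simp: case_prod_beta)
    then show "(\<Sum>p\<in>Sigma (?T n) (\<lambda>xs. adm_perms E (W - set xs)). ?h (n, p))
       = (\<Sum>xs\<in>?T n. exp (-\<alpha> * real n) * Z E \<alpha> (W - set xs))"
      by (simp add: Z_def sum_distrib_left)
  qed
  finally show ?thesis using Z_split_fixing[OF fin x] by simp
qed

lemma Z_le_Z_delete_vertex_mult:
  assumes fin: "finite W" and x: "x \<in> W" and sg: "simple_graph E"
    and card_le: "\<And>n. card {xs\<in>SAP E x n. set xs \<subseteq> W} \<le> a n"
  shows "Z E \<alpha> W \<le> Z E \<alpha> (W - {x}) *
    (1 + (\<Sum>n\<in>{2..card W}. real (a n) * exp (-\<alpha> * real n) / (1 + exp (-2*\<alpha>)) ^ ((n - 1) div 2)))"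
proof -
  let ?s = "1 + exp (-2*\<alpha>)" and ?Z' = "Z E \<alpha> (W - {x})"
  let ?T = "\<lambda>n. {xs\<in>SAP E x n. set xs \<subseteq> W}"
  have s: "?s > 0" by (simp add: add_pos_pos)
  have "Z E \<alpha> W \<le> ?Z' + (\<Sum>n\<in>{2..card W}. \<Sum>xs\<in>?T n. exp (-\<alpha> * real n) * Z E \<alpha> (W - set xs))"
    by (rule Z_le_cycle_expansion[OF fin x])
  also have "\<dots> \<le> ?Z' + (\<Sum>n\<in>{2..card W}. \<Sum>xs\<in>?T n. exp (-\<alpha> * real n) * (?Z' / ?s ^ ((n - 1) div 2)))"
  proof (intro add_left_mono sum_mono mult_left_mono)
    fix n xs assume "xs \<in> ?T n"
    then have "?s ^ ((n - 1) div 2) * Z E \<alpha> (W - set xs) \<le> ?Z'"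
      using Z_diff_cycle[OF fin sg] by auto
    then show "Z E \<alpha> (W - set xs) \<le> ?Z' / ?s ^ ((n - 1) div 2)"
      using s by (simp add: field_simps)
  qed auto
  also have "\<dots> \<le> ?Z' + (\<Sum>n\<in>{2..card W}. real (a n) * (exp (-\<alpha> * real n) * (?Z' / ?s ^ ((n - 1) div 2))))"
  proof (intro add_left_mono sum_mono)
    fix n
    have "(\<Sum>xs\<in>?T n. exp (-\<alpha> * real n) * (?Z' / ?s ^ ((n - 1) div 2)))
        = real (card (?T n)) * (exp (-\<alpha> * real n) * (?Z' / ?s ^ ((n - 1) div 2)))"
      by simp
    also have "\<dots> \<le> real (a n) * (exp (-\<alpha> * real n) * (?Z' / ?s ^ ((n - 1) div 2)))"
      by (rule mult_right_mono) (use card_le[of n] Z_nonneg[of E \<alpha> "W - {x}"] s in auto)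
    finally show "(\<Sum>xs\<in>?T n. exp (-\<alpha> * real n) * (?Z' / ?s ^ ((n - 1) div 2)))
        \<le> real (a n) * (exp (-\<alpha> * real n) * (?Z' / ?s ^ ((n - 1) div 2)))" .
  qed
  also have "\<dots> = ?Z' * (1 + (\<Sum>n\<in>{2..card W}. real (a n) * exp (-\<alpha> * real n) / ?s ^ ((n - 1) div 2)))"
    by (simp add: algebra_simps sum_distrib_left)
  finally show ?thesis .
qed

lemma Z_diff_ge_pow:
  assumes step: "\<And>W x. finite W \<Longrightarrow> x \<in> W \<Longrightarrow> c * Z E \<alpha> W \<le> Z E \<alpha> (W - {x})"
    and c: "0 \<le> c" and U: "finite U"
  shows "A \<subseteq> U \<Longrightarrow> c ^ card A * Z E \<alpha> U \<le> Z E \<alpha> (U - A)"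
proof (induction A rule: infinite_finite_induct)
  case (infinite A)
  then show ?case using U by (meson rev_finite_subset)
next
  case empty
  then show ?case by simp
next
  case (insert a A)
  then have IH: "c ^ card A * Z E \<alpha> U \<le> Z E \<alpha> (U - A)" by simp
  have "c ^ card (insert a A) * Z E \<alpha> U = c * (c ^ card A * Z E \<alpha> U)" using insert(1,2) by simp
  also have "\<dots> \<le> c * Z E \<alpha> (U - A)" by (rule mult_left_mono[OF IH c])
  also have "\<dots> \<le> Z E \<alpha> (U - A - {a})" by (rule step) (use U insert in auto)
  also have "U - A - {a} = U - insert a A" by auto
  finally show ?case .
qed

primrec reachable_within :: "('v \<Rightarrow> 'v \<Rightarrow> bool) \<Rightarrow> 'v \<Rightarrow> nat \<Rightarrow> 'v set" where
  "reachable_within E x 0 = {x}"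
| "reachable_within E x (Suc k) = reachable_within E x k \<union> (\<Union>y\<in>reachable_within E x k. {z. E y z})"

lemma finite_reachable_within: "locally_finite E \<Longrightarrow> finite (reachable_within E x k)"
  by (induction k) (auto simp: locally_finite_def)

lemma reachable_within_mono: "i \<le> j \<Longrightarrow> reachable_within E x i \<subseteq> reachable_within E x j"
proof (induction j)
  case (Suc j) then show ?case by (cases "i = Suc j") auto
qed simp

lemma SAP_nth_reachable_within:
  assumes "xs \<in> SAP E x n" "i < n" shows "xs ! i \<in> reachable_within E x i"
  using assms(2)
proof (induction i)
  case 0 then show ?case using assms(1) by (simp add: SAP_def)
next
  case (Suc i)
  then have "E (xs ! i) (xs ! Suc i)" using assms(1) by (simp add: SAP_def)
  with Suc show ?case by auto
qed

lemma finite_SAP: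
  assumes "locally_finite E" shows "finite (SAP E x n)"
proof (rule finite_subset[OF _ finite_lists_length_le[OF finite_reachable_within[OF assms]]])
  show "SAP E x n \<subseteq> {xs. set xs \<subseteq> reachable_within E x n \<and> length xs \<le> n}"
  proof
    fix xs assume xs: "xs \<in> SAP E x n"
    have "set xs \<subseteq> reachable_within E x n"
    proof
      fix y assume "y \<in> set xs"
      then obtain i where "i < n" "y = xs ! i" using xs by (auto simp: SAP_def in_set_conv_nth)
      then show "y \<in> reachable_within E x n"
        using SAP_nth_reachable_within[OF xs] reachable_within_mono[of i n E x] by auto
    qed
    with xs show "xs \<in> {xs. set xs \<subseteq> reachable_within E x n \<and> length xs \<le> n}"
      by (simp add: SAP_def)
  qed
qed

lemma card_SAP_within_le:
  assumes vt: "vertex_transitive E" and lf: "locally_finite E"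
  shows "card {xs\<in>SAP E x n. set xs \<subseteq> W} \<le> card (SAP E y n)"
proof -
  obtain \<phi> where \<phi>: "graph_automorphism E \<phi>" "\<phi> x = y"
    using vt unfolding vertex_transitive_def by blast
  have inj: "inj \<phi>" and e: "\<And>a b. E a b \<longleftrightarrow> E (\<phi> a) (\<phi> b)"
    using \<phi>(1) by (auto simp: graph_automorphism_def bij_def)
  have "map \<phi> xs \<in> SAP E y n" if "xs \<in> SAP E x n" for xs
  proof -
    have "length xs = n" "1 \<le> n" "distinct xs" "xs ! 0 = x"
      "\<forall>i. Suc i < n \<longrightarrow> E (xs ! i) (xs ! Suc i)" "E (xs ! (n - 1)) (xs ! 0)"
      using that by (auto simp: SAP_def)
    then show ?thesis
      unfolding SAP_def using inj \<phi>(2) e by (auto simp: distinct_map inj_on_subset[OF inj])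
  qed
  then have "map \<phi> ` SAP E x n \<subseteq> SAP E y n" by blast
  moreover have "inj_on (map \<phi>) (SAP E x n)"
    using inj by (simp add: inj_on_def)
  ultimately have "card (SAP E x n) \<le> card (SAP E y n)"
    using card_inj_on_le finite_SAP[OF lf] by blast
  moreover have "card {xs\<in>SAP E x n. set xs \<subseteq> W} \<le> card (SAP E x n)"
    by (rule card_mono[OF finite_SAP[OF lf]]) auto
  ultimately show ?thesis by linarith
qed

text \<open>A cycle of length \<open>n\<close> costs \<open>exp (-\<alpha> n)\<close>, while re-inserting its interior path gains a
  factor \<open>1 + exp (-2 \<alpha>)\<close> per pair of vertices, so the net weight per edge is
  \<open>edge_weight \<alpha> = exp (-\<alpha>) / sqrt (1 + exp (-2 \<alpha>))\<close> (lemma \<open>edge_weight_alt\<close>).\<close>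

definition edge_weight :: "real \<Rightarrow> real" where
  "edge_weight \<alpha> = 1 / sqrt (exp (2*\<alpha>) + 1)"

lemma edge_weight_pos: "0 < edge_weight \<alpha>"
  by (simp add: edge_weight_def add_pos_pos)

lemma edge_weight_alt: "edge_weight \<alpha> = exp (-\<alpha>) / sqrt (1 + exp (-2*\<alpha>))"
proof -
  have "exp (2*\<alpha>) + 1 = exp \<alpha> ^ 2 * (1 + exp (-2*\<alpha>))"
    by (simp add: algebra_simps power2_eq_square exp_add[symmetric] exp_minus_inverse)
  then have "sqrt (exp (2*\<alpha>) + 1) = exp \<alpha> * sqrt (1 + exp (-2*\<alpha>))"
    by (simp add: real_sqrt_mult)
  then show ?thesis by (simp add: edge_weight_def exp_minus field_simps)
qed

lemma edge_weight_strict_antimono: "\<alpha> < \<beta> \<Longrightarrow> edge_weight \<beta> < edge_weight \<alpha>"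
  unfolding edge_weight_def by (intro divide_strict_left_mono) (auto simp: add_pos_pos)

lemma edge_weight_antimono: "\<alpha> \<le> \<beta> \<Longrightarrow> edge_weight \<beta> \<le> edge_weight \<alpha>"
  using edge_weight_strict_antimono[of \<alpha> \<beta>] by (cases "\<alpha> = \<beta>") auto

lemma edge_weight_tendsto_0: "(edge_weight \<longlongrightarrow> 0) at_top"
  unfolding edge_weight_def by real_asymp

lemma critical_edge_weight:
  assumes "0 < \<mu>" "\<alpha>\<^sub>0 + ln (1 + exp (- 2 * \<alpha>\<^sub>0)) / 2 = ln \<mu>"
  shows "\<mu> * edge_weight \<alpha>\<^sub>0 = 1"
proof -
  have "0 < 1 + exp (- 2 * \<alpha>\<^sub>0)" by (simp add: add_pos_pos)
  then have "exp (ln (1 + exp (- 2 * \<alpha>\<^sub>0)) / 2) = sqrt (1 + exp (- 2 * \<alpha>\<^sub>0))"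
    using powr_half_sqrt[of "1 + exp (- 2 * \<alpha>\<^sub>0)"] by (simp add: powr_def)
  then have "\<mu> = exp \<alpha>\<^sub>0 * sqrt (1 + exp (- 2 * \<alpha>\<^sub>0))"
    using assms by (metis exp_add exp_ln)
  moreover have "0 < sqrt (1 + exp (- 2 * \<alpha>\<^sub>0))" by (simp add: add_pos_pos)
  ultimately show ?thesis by (simp add: edge_weight_alt exp_minus)
qed

lemma cycle_weight_le:
  "exp (-\<alpha> * real n) / (1 + exp (-2*\<alpha>)) ^ ((n - 1) div 2) \<le> (1 + exp (-2*\<alpha>)) * edge_weight \<alpha> ^ n"
proof -
  define s where "s = 1 + exp (-2*\<alpha>)"
  define m where "m = (n - 1) div 2"
  have s1: "1 \<le> s" by (simp add: s_def)
  have "sqrt s ^ n \<le> sqrt s ^ (2 * m + 2)"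
    by (rule power_increasing) (use s1 in \<open>auto simp: m_def\<close>)
  also have "\<dots> = s * s ^ m" using s1 by (simp add: power_mult power_add)
  finally have key: "sqrt s ^ n \<le> s * s ^ m" .
  have "edge_weight \<alpha> ^ n = exp (-\<alpha> * real n) / sqrt s ^ n"
    by (simp add: edge_weight_alt s_def power_divide exp_of_nat_mult[symmetric] algebra_simps)
  moreover have "exp (-\<alpha> * real n) / s ^ m \<le> s * (exp (-\<alpha> * real n) / sqrt s ^ n)"
    using key s1 by (simp add: field_simps mult_left_mono)
  ultimately show ?thesis unfolding s_def m_def by simp
qed

lemma summable_of_limsup_root:
  assumes ls: "limsup (\<lambda>n. ereal (root n (real (a n)))) = ereal \<mu>"
    and "\<mu> * q < 1" "0 < q" "0 \<le> \<mu>"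
  shows "summable (\<lambda>n. real (a n) * q ^ n)"
proof -
  define r where "r = (\<mu> + 1/q) / 2"
  have "\<mu> < 1/q" using assms(2,3) by (simp add: field_simps)
  then have r: "\<mu> < r" "r * q < 1" using assms(3) by (auto simp: r_def field_simps)
  have "eventually (\<lambda>n. ereal (root n (real (a n))) < ereal r) sequentially"
    by (rule Limsup_lessD) (use ls r in simp)
  then have "eventually (\<lambda>n. norm (real (a n) * q ^ n) \<le> (r * q) ^ n) sequentially"
    using eventually_gt_at_top[of 0]
  proof eventually_elim
    case (elim n)
    have "real (a n) = root n (real (a n)) ^ n" using elim(2) by (simp add: real_root_pow_pos2)
    also have "\<dots> \<le> r ^ n" by (rule power_mono) (use elim in auto)
    finally show ?case using assms(3) by (simp add: power_mult_distrib mult_right_mono)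
  qed
  then show ?thesis
    by (rule summable_comparison_test_ev) (use r assms in \<open>simp add: summable_geometric\<close>)
qed

lemma summable_SAP_series:
  assumes "cyclic_connective_constant E v0 = ereal \<mu>" "0 < \<mu>"
    and "\<alpha>\<^sub>0 + ln (1 + exp (- 2 * \<alpha>\<^sub>0)) / 2 = ln \<mu>" "\<alpha>\<^sub>0 < \<alpha>"
  shows "summable (\<lambda>n. real (card (SAP E v0 n)) * edge_weight \<alpha> ^ n)"
proof (rule summable_of_limsup_root)
  show "limsup (\<lambda>n. ereal (root n (real (card (SAP E v0 n))))) = ereal \<mu>"
    using assms(1) by (simp add: cyclic_connective_constant_def)
  show "\<mu> * edge_weight \<alpha> < 1"
    using critical_edge_weight[OF assms(2,3)] edge_weight_strict_antimono[OF assms(4)] assms(2)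
    by (metis mult_strict_left_mono)
qed (use assms(2) edge_weight_pos in auto)

definition cycle_series :: "(nat \<Rightarrow> nat) \<Rightarrow> real \<Rightarrow> real" where
  "cycle_series a \<alpha> = (\<Sum>n. real (a n) * edge_weight \<alpha> ^ n)"

definition deletion_factor :: "(nat \<Rightarrow> nat) \<Rightarrow> real \<Rightarrow> real" where
  "deletion_factor a \<alpha> = 1 / (1 + (1 + exp (-2*\<alpha>)) * cycle_series a \<alpha>)"

lemma cycle_series_nonneg:
  "summable (\<lambda>n. real (a n) * edge_weight \<alpha> ^ n) \<Longrightarrow> 0 \<le> cycle_series a \<alpha>"
  unfolding cycle_series_def by (rule suminf_nonneg) (simp_all add: edge_weight_pos less_imp_le)

lemma deletion_factor_pos:
  "summable (\<lambda>n. real (a n) * edge_weight \<alpha> ^ n) \<Longrightarrow> 0 < deletion_factor a \<alpha>"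
  unfolding deletion_factor_def by (simp add: cycle_series_nonneg add_pos_nonneg)

lemma deletion_factor_le_1:
  assumes "summable (\<lambda>n. real (a n) * edge_weight \<alpha> ^ n)"
  shows "deletion_factor a \<alpha> \<le> 1"
proof -
  have "0 \<le> (1 + exp (-2*\<alpha>)) * cycle_series a \<alpha>"
    using cycle_series_nonneg[OF assms] by (simp add: add_nonneg_nonneg)
  then show ?thesis by (simp add: deletion_factor_def)
qed

lemma Z_delete_vertex_ge:
  assumes "finite W" "x \<in> W" "simple_graph E"
    and card_le: "\<And>n. card {xs\<in>SAP E x n. set xs \<subseteq> W} \<le> a n"
    and summable: "summable (\<lambda>n. real (a n) * edge_weight \<alpha> ^ n)"
  shows "deletion_factor a \<alpha> * Z E \<alpha> W \<le> Z E \<alpha> (W - {x})"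
proof -
  let ?s = "1 + exp (-2*\<alpha>)"
  have s: "0 < ?s" by (simp add: add_pos_pos)
  have "(\<Sum>n\<in>{2..card W}. real (a n) * exp (-\<alpha> * real n) / ?s ^ ((n - 1) div 2))
      \<le> (\<Sum>n\<in>{2..card W}. ?s * (real (a n) * edge_weight \<alpha> ^ n))"
    using mult_left_mono[OF cycle_weight_le, of "real (a _)"]
    by (intro sum_mono) (simp add: algebra_simps)
  also have "\<dots> \<le> ?s * cycle_series a \<alpha>"
    unfolding cycle_series_def sum_distrib_left[symmetric] using s
    by (intro mult_left_mono sum_le_suminf[OF summable]) (auto simp: edge_weight_pos less_imp_le)
  finally have "Z E \<alpha> W \<le> Z E \<alpha> (W - {x}) * (1 + ?s * cycle_series a \<alpha>)"
    using Z_le_Z_delete_vertex_mult[OF assms(1-4), of \<alpha>] Z_nonneg[of E \<alpha> "W - {x}"]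
    by (meson add_left_mono mult_left_mono order_trans)
  then show ?thesis
    using cycle_series_nonneg[OF summable] s
    by (simp add: deletion_factor_def field_simps add_pos_nonneg)
qed

lemma cycle_series_le:
  assumes summable: "summable (\<lambda>n. real (a n) * edge_weight \<alpha>\<^sub>1 ^ n)"
    and "a 0 = 0" "a 1 = 0" "\<alpha>\<^sub>1 \<le> \<alpha>"
  shows "summable (\<lambda>n. real (a n) * edge_weight \<alpha> ^ n)"
    and "cycle_series a \<alpha> \<le> cycle_series a \<alpha>\<^sub>1 / edge_weight \<alpha>\<^sub>1 ^ 2 * edge_weight \<alpha> ^ 2"
proof -
  define r where "r = edge_weight \<alpha> / edge_weight \<alpha>\<^sub>1"
  have r: "0 \<le> r" "r \<le> 1"
    using edge_weight_antimono[OF \<open>\<alpha>\<^sub>1 \<le> \<alpha>\<close>] edge_weight_pos[of \<alpha>] edge_weight_pos[of \<alpha>\<^sub>1]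
    by (auto simp: r_def)
  have term_le: "real (a n) * edge_weight \<alpha> ^ n \<le> r ^ 2 * (real (a n) * edge_weight \<alpha>\<^sub>1 ^ n)" for n
  proof (cases "2 \<le> n")
    case True
    have "edge_weight \<alpha> ^ n = r ^ n * edge_weight \<alpha>\<^sub>1 ^ n"
      using edge_weight_pos[of \<alpha>\<^sub>1] by (simp add: r_def power_divide)
    also have "\<dots> \<le> r ^ 2 * edge_weight \<alpha>\<^sub>1 ^ n"
      using power_decreasing[OF True r] edge_weight_pos[of \<alpha>\<^sub>1] by (simp add: mult_right_mono)
    finally show ?thesis by (simp add: mult_left_mono algebra_simps)
  next
    case False
    then have "n = 0 \<or> n = 1" by auto
    then show ?thesis using assms(2,3) by auto
  qed
  have nonneg: "0 \<le> real (a n) * edge_weight \<alpha> ^ n" for n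
    using edge_weight_pos[of \<alpha>] by simp
  show summable': "summable (\<lambda>n. real (a n) * edge_weight \<alpha> ^ n)"
    using term_le nonneg by (intro summable_comparison_test[OF _ summable_mult[OF summable]]) auto
  have "cycle_series a \<alpha> \<le> (\<Sum>n. r ^ 2 * (real (a n) * edge_weight \<alpha>\<^sub>1 ^ n))"
    unfolding cycle_series_def by (rule suminf_le[OF term_le summable' summable_mult[OF summable]])
  also have "\<dots> = r ^ 2 * cycle_series a \<alpha>\<^sub>1"
    unfolding cycle_series_def by (rule suminf_mult[OF summable])
  finally show "cycle_series a \<alpha> \<le> cycle_series a \<alpha>\<^sub>1 / edge_weight \<alpha>\<^sub>1 ^ 2 * edge_weight \<alpha> ^ 2"
    by (simp add: r_def power_divide mult_ac)
qed

lemma deletion_factor_tendsto_1: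
  assumes summable: "summable (\<lambda>n. real (a n) * edge_weight \<alpha>\<^sub>1 ^ n)" and "a 0 = 0" "a 1 = 0"
  shows "(deletion_factor a \<longlongrightarrow> 1) at_top"
proof (rule tendsto_sandwich)
  define K where "K = cycle_series a \<alpha>\<^sub>1 / edge_weight \<alpha>\<^sub>1 ^ 2"
  have "0 \<le> K" using cycle_series_nonneg[OF summable] by (simp add: K_def)
  let ?lower = "\<lambda>\<alpha>. 1 / (1 + (1 + exp (-2*\<alpha>)) * (K * edge_weight \<alpha> ^ 2))"
  have "((\<lambda>\<alpha>::real. 1 + exp (-2*\<alpha>)) \<longlongrightarrow> 1) at_top" by real_asymp
  then have "((\<lambda>\<alpha>. 1 + (1 + exp (-2*\<alpha>)) * (K * edge_weight \<alpha> ^ 2)) \<longlongrightarrow> 1 + 1 * (K * 0 ^ 2)) at_top"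
    by (intro tendsto_intros edge_weight_tendsto_0)
  from tendsto_divide[OF tendsto_const this] show "(?lower \<longlongrightarrow> 1) at_top" by simp
  show "eventually (\<lambda>\<alpha>. ?lower \<alpha> \<le> deletion_factor a \<alpha>) at_top"
    using eventually_ge_at_top[of \<alpha>\<^sub>1]
  proof eventually_elim
    case (elim \<alpha>)
    note bound = cycle_series_le[OF assms elim]
    have "(1 + exp (-2*\<alpha>)) * cycle_series a \<alpha> \<le> (1 + exp (-2*\<alpha>)) * (K * edge_weight \<alpha> ^ 2)"
      using bound(2) by (intro mult_left_mono) (simp_all add: K_def add_nonneg_nonneg)
    then show ?case unfolding deletion_factor_def
      using cycle_series_nonneg[OF bound(1)] \<open>0 \<le> K\<close>
      by (intro divide_left_mono) (auto intro!: add_pos_nonneg mult_pos_pos)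
  qed
  show "eventually (\<lambda>\<alpha>. deletion_factor a \<alpha> \<le> 1) at_top"
    using eventually_ge_at_top[of \<alpha>\<^sub>1]
    by eventually_elim (use cycle_series_le(1)[OF assms] deletion_factor_le_1 in blast)
qed (rule tendsto_const)

theorem proposition3p3:
  fixes E :: "'v \<Rightarrow> 'v \<Rightarrow> bool" and v0 :: 'v and \<mu> \<alpha>\<^sub>0 :: real
  assumes "simple_graph E"
    and "infinite (UNIV :: 'v set)"
    and "vertex_transitive E"
    and "locally_finite E"
    and "cyclic_connective_constant E v0 = ereal \<mu>"
    and "\<mu> > 0"
    and "\<alpha>\<^sub>0 + ln (1 + exp (- 2 * \<alpha>\<^sub>0)) / 2 = ln \<mu>"
  shows "\<exists>c\<^sub>1 :: real \<Rightarrow> real.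
           (\<forall>\<alpha> > \<alpha>\<^sub>0. c\<^sub>1 \<alpha> > 0 \<and>
              (\<forall>U A. finite U \<longrightarrow> A \<subseteq> U \<longrightarrow>
                 Z E \<alpha> (U - A) / Z E \<alpha> U \<ge> c\<^sub>1 \<alpha> ^ card A))
         \<and> (c\<^sub>1 \<longlongrightarrow> 1) at_top"
proof -
  define a where "a n = card (SAP E v0 n)" for n
  have summable: "summable (\<lambda>n. real (a n) * edge_weight \<alpha> ^ n)" if "\<alpha>\<^sub>0 < \<alpha>" for \<alpha>
    unfolding a_def using assms(5-7) that by (rule summable_SAP_series)
  have card_le: "card {xs\<in>SAP E x n. set xs \<subseteq> W} \<le> a n" for x n W
    unfolding a_def by (rule card_SAP_within_le[OF assms(3,4)])
  have "a 0 = 0" "a 1 = 0"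
    using assms(1) by (auto simp: a_def SAP_def simple_graph_def)
  show ?thesis
  proof (intro exI[of _ "deletion_factor a"] conjI allI impI)
    fix \<alpha> :: real assume "\<alpha>\<^sub>0 < \<alpha>"
    note summable_\<alpha> = summable[OF this]
    show "0 < deletion_factor a \<alpha>" using deletion_factor_pos[OF summable_\<alpha>] .
    fix U A :: "'v set" assume "finite U" "A \<subseteq> U"
    have "deletion_factor a \<alpha> ^ card A * Z E \<alpha> U \<le> Z E \<alpha> (U - A)"
      using Z_delete_vertex_ge[OF _ _ assms(1) card_le summable_\<alpha>]
        deletion_factor_pos[OF summable_\<alpha>] \<open>finite U\<close> \<open>A \<subseteq> U\<close>
      by (intro Z_diff_ge_pow) (auto simp: less_imp_le)
    then show "deletion_factor a \<alpha> ^ card A \<le> Z E \<alpha> (U - A) / Z E \<alpha> U"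
      using Z_pos[OF \<open>finite U\<close>] by (simp add: field_simps)
  next
    show "(deletion_factor a \<longlongrightarrow> 1) at_top"
      using summable[of "\<alpha>\<^sub>0 + 1"] \<open>a 0 = 0\<close> \<open>a 1 = 0\<close> by (simp add: deletion_factor_tendsto_1)
  qed
qed

end
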